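(* Let $\{S_w(x)\}_{w\in\mathfrak{S}_\infty}$ be a family of polynomials in $\mathbb{Q}[x_1,x_2,\ldots]$ indexed by permutations. Suppose that for every $w\in\mathfrak{S}_\infty$, $$\sum_{\substack{u,v\in\mathfrak{S}_\infty,\ w=uv\\ \ell(w)=\ell(u)+\ell(v)}}(-1)^{\ell(v)}S_{v^{-1}}(x)\,\mathfrak{S}_u(x)=\begin{cases}1,&w=\mathrm{id},\\0,&\text{otherwise}.\end{cases}$$ Then $S_w(x)=\mathfrak{S}_w(x)$ for all $w\in\mathfrak{S}_\infty$.
   Context: $\mathfrak{S}_\infty$ is the group of permutations of $\{1,2,\ldots\}$ fixing all but finitely many elements, and $\ell$ is the Coxeter length with respect to the simple transpositions $s_i=(i,i+1)$. For $\partial_i f=\frac{f(x)-f(s_ix)}{x_i-x_{i+1}}$ (where $s_i$ swaps $x_i,x_{i+1}$), the Schubert polynomials $\mathfrak{S}_w(x)$ are defined by $\mathfrak{S}_{w_0^n}(x)=x_1^{n-1}x_2^{n-2}\cdots x_{n-1}$ for the longest element $w_0^n\in\mathfrak{S}_n$, and $\partial_i\mathfrak{S}_w=\mathfrak{S}_{ws_i}$ if $\ell(ws_i)=\ell(w)-1$, $\partial_i\mathfrak{S}_w=0$ otherwise. *)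

theory Defs
  imports Complex_Main "HOL-Library.Poly_Mapping" "HOL-Combinatorics.Perm"
begin

text \<open>Polynomials in countably many variables x_0, x_1, ... over the rationals:
  a monomial is a finitely supported exponent vector nat =>0 nat, a polynomial a
  finitely supported map from monomials to coefficients.  (Variables and positions
  are indexed from 0 instead of 1; this is a harmless relabelling.)\<close>

type_synonym qpoly = "(nat \<Rightarrow>\<^sub>0 nat) \<Rightarrow>\<^sub>0 rat"

definition var :: "nat \<Rightarrow> qpoly" where
  "var i = Poly_Mapping.single (Poly_Mapping.single i 1) 1"

definition sref :: "nat \<Rightarrow> nat perm" where
  "sref i = Perm.swap i (Suc i)"

definition len :: "nat perm \<Rightarrow> nat" where
  "len w = card {(i, j). i < j \<and> Perm.apply w j < Perm.apply w i}"

definition swap_vars :: "nat \<Rightarrow> qpoly \<Rightarrow> qpoly" where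
  "swap_vars i f =
     Poly_Mapping.map_key (\<lambda>m. Poly_Mapping.map_key (Perm.apply (sref i)) m) f"

definition divdiff :: "nat \<Rightarrow> qpoly \<Rightarrow> qpoly" where
  "divdiff i f = (THE g. (var i - var (Suc i)) * g = f - swap_vars i f)"

definition w0 :: "nat \<Rightarrow> nat perm" where
  "w0 n = Perm (\<lambda>j. if j < n then n - 1 - j else j)"

definition staircase :: "nat \<Rightarrow> qpoly" where
  "staircase n = (\<Prod>i<n. var i ^ (n - 1 - i))"

definition is_schubert_family :: "(nat perm \<Rightarrow> qpoly) \<Rightarrow> bool" where
  "is_schubert_family S \<longleftrightarrow>
     (\<forall>n\<ge>1. S (w0 n) = staircase n) \<and>
     (\<forall>w i. divdiff i (S w) =
        (if len (w * sref i) + 1 = len w then S (w * sref i) else 0))"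

definition schubert :: "nat perm \<Rightarrow> qpoly" where
  "schubert = (THE S. is_schubert_family S)"

end

theory Submission
  imports Defs "HOL-Library.FuncSet"
begin

text \<open>Let \<open>\<Phi>(w)\<close> be the left-hand side of the hypothesis with \<open>S\<close> replaced by the Schubert
  polynomials themselves. Every divided difference \<open>\<partial>\<^sub>i\<close> kills \<open>\<Phi>(w)\<close>: by the twisted
  Leibniz rule, the terms in which \<open>\<partial>\<^sub>i\<close> hits the factor indexed by \<open>v\<^sup>-\<^sup>1\<close> cancel against
  those in which it hits the factor indexed by \<open>u\<close>, under \<open>(u, v) \<mapsto> (u s\<^sub>i, s\<^sub>i v)\<close>.
  A polynomial in infinitely many variables that is invariant under all \<open>s\<^sub>i\<close> is constant,
  and as the Schubert polynomial of \<open>w\<close> is homogeneous of degree \<open>\<ell>(w)\<close>, the constant is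
  \<open>1\<close> for \<open>w = id\<close> and \<open>0\<close> otherwise. So the Schubert polynomials satisfy the hypothesis,
  and the hypothesis determines \<open>S\<close> by induction on length, the only summand involving
  \<open>S\<close> at length \<open>\<ell>(w)\<close> being the one with \<open>u = id\<close>.

  Since \<open>schubert\<close> is given by a description, the Schubert polynomials also have to be
  constructed: inside \<open>S\<^sub>n\<close> they are obtained from the staircase monomial by applying
  divided differences along ascents, and the result is independent of \<open>n\<close>.\<close>

lemma apply_inverse_apply [simp]: "Perm.apply (inverse \<sigma>) (Perm.apply \<sigma> x) = x"
  by (simp add: apply_sequence)

lemma apply_apply_inverse [simp]: "Perm.apply \<sigma> (Perm.apply (inverse \<sigma>) x) = x"
  by (simp add: apply_sequence)

lemma poly_mapping_single_induct [case_names add single]: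
  fixes P :: "('a \<Rightarrow>\<^sub>0 'b::comm_monoid_add) \<Rightarrow> bool"
  assumes add: "\<And>f g. P f \<Longrightarrow> P g \<Longrightarrow> P (f + g)"
    and single: "\<And>m c. P (Poly_Mapping.single m c)"
  shows "P f"
proof (induct f rule: Poly_Mapping.update_induct)
  case const
  then show ?case using single[of undefined 0] by simp
next
  case (update f a b)
  have "Poly_Mapping.update a b f = f + Poly_Mapping.single a b"
    using update(1) by (intro poly_mapping_eqI)
      (auto simp: Poly_Mapping.lookup_update lookup_add lookup_single when_def in_keys_iff)
  then show ?case using add single update by simp
qed

lemma additive_eq_if_eq_on_single:
  fixes \<phi> \<psi> :: "('a \<Rightarrow>\<^sub>0 'b::comm_monoid_add) \<Rightarrow> 'c::comm_monoid_add"
  assumes "\<And>f g. \<phi> (f + g) = \<phi> f + \<phi> g" and "\<And>f g. \<psi> (f + g) = \<psi> f + \<psi> g"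
    and "\<And>m c. \<phi> (Poly_Mapping.single m c) = \<psi> (Poly_Mapping.single m c)"
  shows "\<phi> f = \<psi> f"
  by (induct f rule: poly_mapping_single_induct) (simp_all add: assms)

lemma multiplicative_if_multiplicative_on_single:
  fixes \<phi> :: "('a::monoid_add \<Rightarrow>\<^sub>0 'b::semiring_0) \<Rightarrow> 'c::semiring_0"
  assumes add: "\<And>f g. \<phi> (f + g) = \<phi> f + \<phi> g"
    and single: "\<And>a b c d. \<phi> (Poly_Mapping.single a c * Poly_Mapping.single b d) =
      \<phi> (Poly_Mapping.single a c) * \<phi> (Poly_Mapping.single b d)"
  shows "\<phi> (f * g) = \<phi> f * \<phi> g"
proof -
  have "\<phi> (Poly_Mapping.single a c * g) = \<phi> (Poly_Mapping.single a c) * \<phi> g" for a c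
    by (induct g rule: poly_mapping_single_induct) (simp_all add: distrib_left add single)
  then show ?thesis
    by (induct f rule: poly_mapping_single_induct) (simp_all add: distrib_right add)
qed

lemma monomial_add_eq_0_iff: "a + b = (0 :: nat \<Rightarrow>\<^sub>0 nat) \<longleftrightarrow> a = 0 \<and> b = 0"
  by (metis add_is_0 lookup_add lookup_zero poly_mapping_eqI add_0)

lemma lookup_mult_zero:
  "Poly_Mapping.lookup (f * g) 0 = Poly_Mapping.lookup f 0 * Poly_Mapping.lookup (g :: qpoly) 0"
proof -
  have "Poly_Mapping.lookup (Poly_Mapping.single a c * g) 0 =
      Poly_Mapping.lookup (Poly_Mapping.single a c) 0 * Poly_Mapping.lookup g 0" for a c
    by (induct g rule: poly_mapping_single_induct)
      (auto simp: distrib_left lookup_add mult_single lookup_single when_def monomial_add_eq_0_iff)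
  then show ?thesis
    by (induct f rule: poly_mapping_single_induct) (simp_all add: distrib_right lookup_add)
qed

definition permute_exps :: "nat perm \<Rightarrow> (nat \<Rightarrow>\<^sub>0 nat) \<Rightarrow> (nat \<Rightarrow>\<^sub>0 nat)" where
  "permute_exps \<sigma> = Poly_Mapping.map_key (Perm.apply \<sigma>)"

definition permute_vars :: "nat perm \<Rightarrow> qpoly \<Rightarrow> qpoly" where
  "permute_vars \<sigma> = Poly_Mapping.map_key (permute_exps \<sigma>)"

lemma lookup_permute_exps:
  "Poly_Mapping.lookup (permute_exps \<sigma> m) j = Poly_Mapping.lookup m (Perm.apply \<sigma> j)"
  by (simp add: permute_exps_def map_key.rep_eq bij_is_inj)

lemma permute_exps_permute_exps:
  "permute_exps \<sigma> (permute_exps \<tau> m) = permute_exps (\<tau> * \<sigma>) m"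
  by (rule poly_mapping_eqI) (simp add: lookup_permute_exps apply_times)

lemma permute_exps_one [simp]: "permute_exps 1 m = m"
  by (rule poly_mapping_eqI) (simp add: lookup_permute_exps)

lemma permute_exps_zero [simp]: "permute_exps \<sigma> 0 = 0"
  by (rule poly_mapping_eqI) (simp add: lookup_permute_exps)

lemma permute_exps_add: "permute_exps \<sigma> (a + b) = permute_exps \<sigma> a + permute_exps \<sigma> b"
  by (rule poly_mapping_eqI) (simp add: lookup_permute_exps lookup_add)

lemma permute_exps_single:
  "permute_exps \<sigma> (Poly_Mapping.single j k) = Poly_Mapping.single (Perm.apply (inverse \<sigma>) j) k"
  by (rule poly_mapping_eqI)
    (auto simp: lookup_permute_exps lookup_single when_def)

lemma permute_exps_inverse [simp]: "permute_exps (inverse \<sigma>) (permute_exps \<sigma> m) = m"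
  by (simp add: permute_exps_permute_exps)

lemma inj_permute_exps: "inj (permute_exps \<sigma>)"
  by (metis injI permute_exps_inverse)

lemma lookup_permute_vars:
  "Poly_Mapping.lookup (permute_vars \<sigma> f) m = Poly_Mapping.lookup f (permute_exps \<sigma> m)"
  by (simp add: permute_vars_def map_key.rep_eq inj_permute_exps)

lemma permute_vars_permute_vars:
  "permute_vars \<sigma> (permute_vars \<tau> f) = permute_vars (\<sigma> * \<tau>) f"
  by (rule poly_mapping_eqI) (simp add: lookup_permute_vars permute_exps_permute_exps)

lemma permute_vars_one [simp]: "permute_vars 1 f = f"
  by (rule poly_mapping_eqI) (simp add: lookup_permute_vars)

lemma permute_vars_single:
  "permute_vars \<sigma> (Poly_Mapping.single m c) = Poly_Mapping.single (permute_exps (inverse \<sigma>) m) c"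
  by (rule poly_mapping_eqI) (auto simp: lookup_permute_vars lookup_single when_def
      permute_exps_permute_exps dest: arg_cong[of _ _ "permute_exps \<sigma>"])

lemma permute_vars_add [simp]: "permute_vars \<sigma> (f + g) = permute_vars \<sigma> f + permute_vars \<sigma> g"
  by (rule poly_mapping_eqI) (simp add: lookup_permute_vars lookup_add)

lemma permute_vars_diff [simp]: "permute_vars \<sigma> (f - g) = permute_vars \<sigma> f - permute_vars \<sigma> g"
  by (rule poly_mapping_eqI) (simp add: lookup_permute_vars lookup_minus)

lemma permute_vars_uminus [simp]: "permute_vars \<sigma> (- f) = - permute_vars \<sigma> f"
  by (rule poly_mapping_eqI) (simp add: lookup_permute_vars)

lemma permute_vars_zero [simp]: "permute_vars \<sigma> 0 = 0"
  by (rule poly_mapping_eqI) (simp add: lookup_permute_vars)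

lemma permute_vars_mult [simp]: "permute_vars \<sigma> (f * g) = permute_vars \<sigma> f * permute_vars \<sigma> g"
  by (rule multiplicative_if_multiplicative_on_single)
    (simp_all add: mult_single permute_vars_single permute_exps_add)

lemma permute_vars_const [simp]: "permute_vars \<sigma> (Poly_Mapping.single 0 c) = Poly_Mapping.single 0 c"
  by (simp add: permute_vars_single)

lemma permute_vars_one_poly [simp]: "permute_vars \<sigma> 1 = 1"
  using permute_vars_const[of \<sigma> 1] by simp

lemma permute_vars_numeral [simp]: "permute_vars \<sigma> (numeral k) = numeral k"
  using permute_vars_const[of \<sigma> "numeral k"] by simp

lemma permute_vars_power [simp]: "permute_vars \<sigma> (f ^ k) = permute_vars \<sigma> f ^ k"
  by (induct k) simp_all

lemma permute_vars_prod: "permute_vars \<sigma> (prod g A) = (\<Prod>a\<in>A. permute_vars \<sigma> (g a))"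
  by (induct A rule: infinite_finite_induct) simp_all

lemma permute_vars_var [simp]: "permute_vars \<sigma> (var j) = var (Perm.apply \<sigma> j)"
  by (simp add: var_def permute_vars_single permute_exps_single)

lemma swap_vars_eq_permute_vars: "swap_vars i = permute_vars (sref i)"
  by (simp add: fun_eq_iff swap_vars_def permute_vars_def permute_exps_def)

lemma apply_sref: "Perm.apply (sref i) j = (if j = i then Suc i else if j = Suc i then i else j)"
  by (simp add: sref_def)

lemma sref_sref [simp]: "sref i * sref i = 1"
  by (simp add: sref_def)

lemma inverse_sref [simp]: "inverse (sref i) = sref i"
  by (simp add: sref_def)

lemma mult_sref_sref [simp]: "w * sref i * sref i = w"
  by (simp add: mult.assoc)

lemma sref_commute: "Suc i < j \<or> Suc j < i \<Longrightarrow> sref i * sref j = sref j * sref i"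
  by (rule perm_eqI) (auto simp: apply_times apply_sref)

lemma sref_braid: "sref i * sref (Suc i) * sref i = sref (Suc i) * sref i * sref (Suc i)"
  by (rule perm_eqI) (auto simp: apply_times apply_sref)

lemma swap_vars_add [simp]: "swap_vars i (f + g) = swap_vars i f + swap_vars i g"
  and swap_vars_diff [simp]: "swap_vars i (f - g) = swap_vars i f - swap_vars i g"
  and swap_vars_mult [simp]: "swap_vars i (f * g) = swap_vars i f * swap_vars i g"
  and swap_vars_var [simp]: "swap_vars i (var j) = var (Perm.apply (sref i) j)"
  by (simp_all add: swap_vars_eq_permute_vars)

lemma swap_vars_swap_vars [simp]: "swap_vars i (swap_vars i f) = f"
  by (simp add: swap_vars_eq_permute_vars permute_vars_permute_vars)

lemma swap_vars_commute:
  assumes "Suc i < j \<or> Suc j < i"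
  shows "swap_vars i (swap_vars j f) = swap_vars j (swap_vars i f)"
  by (simp add: swap_vars_eq_permute_vars permute_vars_permute_vars sref_commute[OF assms])

lemma swap_vars_braid:
  "swap_vars i (swap_vars (Suc i) (swap_vars i f)) =
   swap_vars (Suc i) (swap_vars i (swap_vars (Suc i) f))"
  by (simp add: swap_vars_eq_permute_vars permute_vars_permute_vars sref_braid[simplified mult.assoc])

subsection \<open>Divided differences\<close>

definition var_diff :: "nat \<Rightarrow> qpoly" where
  "var_diff i = var i - var (Suc i)"

lemma var_minus_var_nonzero:
  assumes "a \<noteq> b"
  shows "var a - var b \<noteq> 0"
proof
  assume "var a - var b = 0"
  then have "Poly_Mapping.lookup (var a - var b) (Poly_Mapping.single a 1) = 0" by simp
  moreover have "Poly_Mapping.single a (1::nat) \<noteq> Poly_Mapping.single b 1"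
    using assms by (metis lookup_single_eq lookup_single_not_eq zero_neq_one)
  ultimately show False by (simp add: var_def lookup_minus lookup_single when_def)
qed

lemma var_diff_nonzero [simp]: "var_diff i \<noteq> 0"
  unfolding var_diff_def by (rule var_minus_var_nonzero) simp

lemma swap_vars_var_diff [simp]: "swap_vars i (var_diff i) = - var_diff i"
  by (simp add: var_diff_def swap_vars_eq_permute_vars apply_sref)

lemma var_power: "var j ^ k = Poly_Mapping.single (Poly_Mapping.single j k) 1"
proof (induct k)
  case (Suc k)
  then show ?case
    by (simp add: var_def mult_single mult.commute flip: single_add)
qed simp

lemma var_diff_dvd: "var_diff i dvd f - swap_vars i f"
proof -
  let ?D = "\<lambda>f. var_diff i dvd f - swap_vars i f"
  have mult: "?D (f * g)" if "?D f" "?D g" for f g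
  proof -
    have "f * g - swap_vars i (f * g) = (f - swap_vars i f) * g + swap_vars i f * (g - swap_vars i g)"
      by (simp add: swap_vars_eq_permute_vars algebra_simps)
    then show ?thesis using that by (simp add: dvd_add dvd_mult dvd_mult2)
  qed
  have const: "?D (Poly_Mapping.single 0 c)" for c
    by (simp add: swap_vars_eq_permute_vars)
  have var: "?D (var j)" for j
  proof -
    consider "j = i" | "j = Suc i" | "j \<noteq> i" "j \<noteq> Suc i" by blast
    then show ?thesis
    proof cases
      case 2
      then have "var j - swap_vars i (var j) = - var_diff i"
        by (simp add: swap_vars_eq_permute_vars apply_sref var_diff_def)
      then show ?thesis by simp
    qed (simp_all add: swap_vars_eq_permute_vars apply_sref var_diff_def)
  qed
  have monomial: "?D (Poly_Mapping.single m 1)" for m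
  proof (induct m rule: poly_mapping_single_induct)
    case (add a b)
    have "Poly_Mapping.single (a + b) 1 = Poly_Mapping.single a 1 * (Poly_Mapping.single b 1 :: qpoly)"
      by (simp add: mult_single)
    then show ?case using mult[OF add] by simp
  next
    case (single j k)
    have "?D (var j ^ k)"
    proof (induct k)
      case 0
      show ?case using const[of 1] by simp
    next
      case (Suc k)
      show ?case using mult[OF var Suc] by simp
    qed
    then show ?case by (simp add: var_power)
  qed
  show ?thesis
  proof (induct f rule: poly_mapping_single_induct)
    case (add f g)
    have "f + g - swap_vars i (f + g) = (f - swap_vars i f) + (g - swap_vars i g)"
      by (simp add: swap_vars_eq_permute_vars)
    then show ?case using add by (metis dvd_add)
  next
    case (single m c)
    then show ?case using mult[OF const monomial] by (simp add: mult_single)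
  qed
qed

lemma var_diff_mult_divdiff: "var_diff i * divdiff i f = f - swap_vars i f"
proof -
  obtain g where g: "f - swap_vars i f = var_diff i * g"
    using var_diff_dvd by (rule dvdE)
  have "(var i - var (Suc i)) * divdiff i f = f - swap_vars i f"
    unfolding divdiff_def
  proof (rule theI[of _ g])
    show "(var i - var (Suc i)) * g = f - swap_vars i f" using g by (simp add: var_diff_def)
    fix h assume "(var i - var (Suc i)) * h = f - swap_vars i f"
    then show "h = g" using g var_diff_nonzero[of i] by (simp add: var_diff_def)
  qed
  then show ?thesis by (simp add: var_diff_def)
qed

lemma divdiff_eqI: "var_diff i * g = f - swap_vars i f \<Longrightarrow> divdiff i f = g"
  by (metis var_diff_mult_divdiff mult_left_cancel var_diff_nonzero)

lemma divdiff_add [simp]: "divdiff i (f + g) = divdiff i f + divdiff i g"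
  by (rule divdiff_eqI) (simp add: var_diff_mult_divdiff distrib_left swap_vars_eq_permute_vars)

lemma divdiff_zero [simp]: "divdiff i 0 = 0"
  by (rule divdiff_eqI) (simp add: swap_vars_eq_permute_vars)

lemma divdiff_sum: "divdiff i (sum g A) = (\<Sum>a\<in>A. divdiff i (g a))"
  by (induct A rule: infinite_finite_induct) simp_all

lemma divdiff_eq_0_iff: "divdiff i f = 0 \<longleftrightarrow> swap_vars i f = f"
  using var_diff_mult_divdiff[of i f] by (metis mult_zero_right no_zero_divisors
      right_minus_eq var_diff_nonzero)

lemma swap_vars_divdiff [simp]: "swap_vars i (divdiff i f) = divdiff i f"
proof -
  have "var_diff i * swap_vars i (divdiff i f) = - swap_vars i (var_diff i * divdiff i f)"
    by simp
  also have "\<dots> = var_diff i * divdiff i f"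
    by (simp add: var_diff_mult_divdiff)
  finally show ?thesis by simp
qed

lemma divdiff_mult_invariant:
  "swap_vars i a = a \<Longrightarrow> divdiff i (a * f) = a * divdiff i f"
  by (rule divdiff_eqI)
    (simp add: var_diff_mult_divdiff algebra_simps swap_vars_eq_permute_vars)

lemma divdiff_mult:
  "divdiff i (f * g) =
   divdiff i f * g + f * divdiff i g - var_diff i * divdiff i f * divdiff i g"
proof (rule divdiff_eqI)
  have "swap_vars i f = f - var_diff i * divdiff i f" "swap_vars i g = g - var_diff i * divdiff i g"
    by (simp_all add: var_diff_mult_divdiff)
  then show "var_diff i * (divdiff i f * g + f * divdiff i g - var_diff i * divdiff i f * divdiff i g) =
      f * g - swap_vars i (f * g)"
    by (simp only: swap_vars_mult) (simp add: algebra_simps)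
qed

lemma divdiff_var_self: "divdiff i (var i) = 1"
  by (rule divdiff_eqI) (simp add: swap_vars_eq_permute_vars apply_sref var_diff_def)

lemma divdiff_divdiff [simp]: "divdiff i (divdiff i f) = 0"
  by (simp add: divdiff_eq_0_iff)

text \<open>The commutation and braid relations are obtained by clearing denominators: both sides,
  multiplied by the same product of linear forms, expand to the same alternating sum over
  the group generated by the two transpositions.\<close>

lemma var_diff_mult_divdiff_divdiff:
  assumes "swap_vars i (var_diff j) = var_diff j"
  shows "var_diff i * var_diff j * divdiff i (divdiff j f) =
    f - swap_vars j f - swap_vars i f + swap_vars i (swap_vars j f)"
proof -
  have "var_diff i * var_diff j * divdiff i (divdiff j f) =
      var_diff j * (var_diff i * divdiff i (divdiff j f))"
    by (simp only: ac_simps)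
  also have "\<dots> = var_diff j * divdiff j f - var_diff j * swap_vars i (divdiff j f)"
    by (simp only: var_diff_mult_divdiff right_diff_distrib)
  also have "\<dots> = var_diff j * divdiff j f - swap_vars i (var_diff j * divdiff j f)"
    using assms by simp
  finally show ?thesis
    by (simp only: var_diff_mult_divdiff) (simp add: algebra_simps)
qed

lemma divdiff_commute:
  assumes "Suc i < j \<or> Suc j < i"
  shows "divdiff i (divdiff j f) = divdiff j (divdiff i f)"
proof -
  have "swap_vars i (var_diff j) = var_diff j" "swap_vars j (var_diff i) = var_diff i"
    using assms by (auto simp: var_diff_def apply_sref)
  then have "var_diff i * var_diff j * divdiff i (divdiff j f) =
      var_diff j * var_diff i * divdiff j (divdiff i f)"
    using swap_vars_commute[OF assms, of f]
    by (simp only: var_diff_mult_divdiff_divdiff) (simp add: algebra_simps)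
  then show ?thesis by (simp add: mult.commute[of "var_diff j"])
qed

lemma var_diff_mult_divdiff_divdiff_divdiff:
  assumes e1: "swap_vars p (var_diff q) = e" and e2: "swap_vars q (var_diff p) = e"
    and e3: "e - var_diff q = var_diff p"
  shows "var_diff p * var_diff q * e * divdiff p (divdiff q (divdiff p f)) =
    f - swap_vars p f - swap_vars q f + swap_vars q (swap_vars p f)
      + swap_vars p (swap_vars q f) - swap_vars p (swap_vars q (swap_vars p f))"
proof -
  define a where "a = divdiff p f"
  define b where "b = divdiff q a"
  have sa: "swap_vars p a = a" by (simp add: a_def)
  have se: "swap_vars p e = var_diff q" using e1 by (metis swap_vars_swap_vars)
  have da: "var_diff p * a = f - swap_vars p f" by (simp add: a_def var_diff_mult_divdiff)
  have db: "var_diff q * b = a - swap_vars q a" by (simp add: b_def var_diff_mult_divdiff)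
  have "var_diff p * var_diff q * e * divdiff p b = var_diff q * e * (var_diff p * divdiff p b)"
    by (simp only: ac_simps)
  also have "\<dots> = var_diff q * e * (b - swap_vars p b)"
    by (simp only: var_diff_mult_divdiff)
  also have "\<dots> = e * (var_diff q * b) - var_diff q * swap_vars p (var_diff q * b)"
    by (simp add: e1 algebra_simps)
  also have "\<dots> = (e - var_diff q) * a - e * swap_vars q a
      + var_diff q * swap_vars p (swap_vars q a)"
    by (simp only: db swap_vars_diff sa) (simp add: algebra_simps)
  also have "\<dots> = var_diff p * a - swap_vars q (var_diff p * a)
      + swap_vars p (swap_vars q (var_diff p * a))"
    by (simp add: e2 se sa e3)
  finally have "var_diff p * var_diff q * e * divdiff p b = (f - swap_vars p f)
      - swap_vars q (f - swap_vars p f) + swap_vars p (swap_vars q (f - swap_vars p f))"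
    by (simp only: da)
  then show ?thesis by (simp add: a_def b_def algebra_simps)
qed

lemma divdiff_braid:
  "divdiff i (divdiff (Suc i) (divdiff i f)) = divdiff (Suc i) (divdiff i (divdiff (Suc i) f))"
proof -
  define e where "e = var i - var (Suc (Suc i))"
  have "e \<noteq> 0" unfolding e_def by (rule var_minus_var_nonzero) simp
  have "var_diff i * var_diff (Suc i) * e * divdiff i (divdiff (Suc i) (divdiff i f)) =
      f - swap_vars i f - swap_vars (Suc i) f + swap_vars (Suc i) (swap_vars i f)
      + swap_vars i (swap_vars (Suc i) f) - swap_vars i (swap_vars (Suc i) (swap_vars i f))"
    by (rule var_diff_mult_divdiff_divdiff_divdiff) (simp_all add: e_def var_diff_def apply_sref)
  also have "\<dots> = f - swap_vars (Suc i) f - swap_vars i f + swap_vars i (swap_vars (Suc i) f)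
      + swap_vars (Suc i) (swap_vars i f)
      - swap_vars (Suc i) (swap_vars i (swap_vars (Suc i) f))"
    by (simp only: swap_vars_braid) (simp add: algebra_simps)
  also have "\<dots> = var_diff (Suc i) * var_diff i * e *
      divdiff (Suc i) (divdiff i (divdiff (Suc i) f))"
    by (rule var_diff_mult_divdiff_divdiff_divdiff[symmetric])
      (simp_all add: e_def var_diff_def apply_sref)
  finally show ?thesis using \<open>e \<noteq> 0\<close> by (simp add: mult.commute[of "var_diff i"])
qed

subsection \<open>Length and descents\<close>

definition inversions :: "nat perm \<Rightarrow> (nat \<times> nat) set" where
  "inversions w = {(i, j). i < j \<and> Perm.apply w j < Perm.apply w i}"

definition descent :: "nat perm \<Rightarrow> nat \<Rightarrow> bool" where
  "descent w i \<longleftrightarrow> Perm.apply w (Suc i) < Perm.apply w i"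

lemma len_eq_card_inversions: "len w = card (inversions w)"
  by (simp add: len_def inversions_def)

lemma apply_less_if_affected_subset:
  assumes "affected w \<subseteq> {..<n}" "j < n"
  shows "Perm.apply w j < n"
  using assms by (metis apply_affected in_affected lessThan_iff subsetD)

lemma inversions_subset:
  assumes "affected w \<subseteq> {..<n}"
  shows "inversions w \<subseteq> {..<n} \<times> {..<n}"
proof
  fix p assume "p \<in> inversions w"
  then obtain a b where ab: "p = (a, b)" "a < b" "Perm.apply w b < Perm.apply w a"
    unfolding inversions_def by blast
  have fixed: "Perm.apply w k = k" if "n \<le> k" for k
    using assms that by (auto simp: in_affected)
  have "a < n"
  proof (rule ccontr)
    assume "\<not> a < n"
    then show False using ab fixed[of a] fixed[of b] by simp
  qed
  moreover have "b < n"
  proof (rule ccontr)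
    assume "\<not> b < n"
    then show False using ab fixed[of b] apply_less_if_affected_subset[OF assms \<open>a < n\<close>] by simp
  qed
  ultimately show "p \<in> {..<n} \<times> {..<n}" using ab by simp
qed

lemma exists_affected_subset_lessThan: "\<exists>n. affected (w :: nat perm) \<subseteq> {..<n}"
proof -
  obtain n where "\<forall>x\<in>affected w. x < n"
    using finite_nat_set_iff_bounded[THEN iffD1, OF finite_affected] by blast
  then have "affected w \<subseteq> {..<n}" by (simp add: subset_iff)
  then show ?thesis by blast
qed

lemma finite_inversions: "finite (inversions w)"
proof -
  obtain n where "affected w \<subseteq> {..<n}"
    using exists_affected_subset_lessThan by blast
  from inversions_subset[OF this] show ?thesis by (rule finite_subset) simp
qed

lemma len_le_if_affected_subset: "affected w \<subseteq> {..<n} \<Longrightarrow> len w \<le> n * n"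
  unfolding len_eq_card_inversions
  using card_mono[OF _ inversions_subset, of n w] by (simp add: card_cartesian_product)

lemma not_descent_iff: "\<not> descent w i \<longleftrightarrow> Perm.apply w i < Perm.apply w (Suc i)"
  using apply_inj[of w i "Suc i"] by (auto simp: descent_def)

lemma descent_mult_sref_self [simp]: "descent (w * sref i) i \<longleftrightarrow> \<not> descent w i"
  by (simp add: not_descent_iff) (simp add: descent_def apply_times apply_sref)

lemma len_mult_sref_ascent:
  assumes "\<not> descent w i"
  shows "len (w * sref i) = Suc (len w)"
proof -
  let ?t = "Perm.apply (sref i)"
  let ?swap_pair = "\<lambda>(a, b). (?t a, ?t b)"
  have asc: "Perm.apply w i < Perm.apply w (Suc i)" using assms by (simp add: not_descent_iff)
  have t_mono: "?t a < ?t b" if "a < b" "(a, b) \<noteq> (i, Suc i)" for a b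
    using that by (auto simp: apply_sref)
  have "inversions (w * sref i) = insert (i, Suc i) (?swap_pair ` inversions w)"
  proof (intro equalityI subsetI)
    fix p assume "p \<in> inversions (w * sref i)"
    then obtain a b where ab: "p = (a, b)" "a < b" "Perm.apply w (?t b) < Perm.apply w (?t a)"
      unfolding inversions_def by (auto simp: apply_times)
    show "p \<in> insert (i, Suc i) (?swap_pair ` inversions w)"
    proof (cases "(a, b) = (i, Suc i)")
      case False
      then have "(?t a, ?t b) \<in> inversions w" using t_mono ab by (simp add: inversions_def)
      moreover have "p = ?swap_pair (?t a, ?t b)" using ab by (simp add: apply_sref)
      ultimately show ?thesis by blast
    qed (use ab in simp)
  next
    fix p assume p: "p \<in> insert (i, Suc i) (?swap_pair ` inversions w)"
    show "p \<in> inversions (w * sref i)"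
    proof (cases "p = (i, Suc i)")
      case False
      then obtain a b where ab: "(a, b) \<in> inversions w" "p = (?t a, ?t b)" using p by auto
      then have "(a, b) \<noteq> (i, Suc i)" using asc by (auto simp: inversions_def)
      then show ?thesis using ab t_mono by (auto simp: inversions_def apply_times apply_sref)
    qed (use asc in \<open>simp add: inversions_def apply_times apply_sref\<close>)
  qed
  moreover have "inj_on ?swap_pair (inversions w)"
    by (rule inj_onI) (auto simp: apply_inj)
  moreover have "(i, Suc i) \<notin> ?swap_pair ` inversions w"
    by (auto simp: inversions_def apply_sref split: if_splits)
  ultimately show ?thesis unfolding len_eq_card_inversions
    using finite_inversions[of w] by (simp add: card_image)
qed

lemma len_mult_sref_descent: "descent w i \<Longrightarrow> len w = Suc (len (w * sref i))"
  using len_mult_sref_ascent[of "w * sref i" i] by simp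

lemma descent_iff_len_mult_sref: "descent w i \<longleftrightarrow> len (w * sref i) + 1 = len w"
  using len_mult_sref_ascent[of w i] len_mult_sref_descent[of w i] by (cases "descent w i") auto

lemma len_mult_sref_le: "len (w * sref i) \<le> Suc (len w)"
  using len_mult_sref_ascent[of w i] len_mult_sref_descent[of w i] by (cases "descent w i") auto

lemma exists_descent:
  assumes "w \<noteq> 1"
  shows "\<exists>i. descent w i"
proof (rule ccontr)
  assume "\<nexists>i. descent w i"
  then have "Perm.apply w i < Perm.apply w (Suc i)" for i
    by (simp add: not_descent_iff)
  then have mono: "strict_mono (Perm.apply w)"
    by (simp add: strict_mono_Suc_iff)
  have fixed: "Perm.apply w j = j" for j
  proof (induct j rule: less_induct)
    case (less j)
    define x where "x = Perm.apply (inverse w) j"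
    have x: "Perm.apply w x = j" by (simp add: x_def)
    have "\<not> x < j"
    proof
      assume "x < j"
      then show False using less[of x] x by simp
    qed
    then have "Perm.apply w j \<le> Perm.apply w x" using mono by (simp add: strict_mono_less_eq)
    then show ?case using strict_mono_imp_increasing[OF mono, of j] x by simp
  qed
  have "w = 1" by (rule perm_eqI) (simp add: fixed)
  then show False using assms by simp
qed
lemma len_one [simp]: "len 1 = 0"
proof -
  have "inversions 1 = {}" by (auto simp: inversions_def)
  then show ?thesis by (simp add: len_eq_card_inversions)
qed

lemma len_eq_0_iff: "len w = 0 \<longleftrightarrow> w = 1"
  using exists_descent len_mult_sref_descent by (metis Zero_not_Suc len_one)

lemma len_mult_le: "len (x * y) \<le> len x + len y"
proof (induct "len y" arbitrary: y)
  case 0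
  then show ?case by (simp add: len_eq_0_iff)
next
  case (Suc k)
  then obtain i where "descent y i" using exists_descent len_eq_0_iff by (metis Zero_not_Suc)
  then have ly: "len y = Suc (len (y * sref i))" by (rule len_mult_sref_descent)
  have "len (x * y) \<le> Suc (len (x * (y * sref i)))"
    using len_mult_sref_le[of "x * (y * sref i)" i] by (simp add: mult.assoc)
  also have "len (x * (y * sref i)) \<le> len x + len (y * sref i)" using Suc ly by simp
  finally show ?case using ly by simp
qed
lemma len_inverse [simp]: "len (inverse w) = len w"
proof -
  let ?flip = "\<lambda>(a, b). (Perm.apply w b, Perm.apply w a)"
  have "inversions (inverse w) = ?flip ` inversions w"
  proof (intro equalityI subsetI)
    fix p assume "p \<in> inversions (inverse w)"
    then obtain a b where ab: "p = (a, b)" "a < b"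
        "Perm.apply (inverse w) b < Perm.apply (inverse w) a"
      unfolding inversions_def by blast
    then have "(Perm.apply (inverse w) b, Perm.apply (inverse w) a) \<in> inversions w"
      by (simp add: inversions_def)
    then show "p \<in> ?flip ` inversions w" using ab by force
  qed (auto simp: inversions_def)
  moreover have "inj_on ?flip (inversions w)"
    by (rule inj_onI) (auto simp: apply_inj)
  ultimately show ?thesis unfolding len_eq_card_inversions by (simp add: card_image)
qed

lemma len_sref_mult: "len (sref i * v) = len (inverse v * sref i)"
  by (metis len_inverse inverse_sref perm.inverse_distrib_swap)

lemma descent_less_if_affected_subset:
  assumes "affected w \<subseteq> {..<n}" "descent w i"
  shows "Suc i < n"
proof (rule ccontr)
  assume "\<not> Suc i < n"
  then have "Perm.apply w (Suc i) = Suc i" using assms(1) by (auto simp: in_affected)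
  moreover have "Perm.apply w i < n \<or> Perm.apply w i = i"
    using assms(1) apply_less_if_affected_subset[OF assms(1)] by (auto simp: in_affected)
  ultimately show False using assms(2) \<open>\<not> Suc i < n\<close> by (auto simp: descent_def)
qed

lemma affected_sref: "affected (sref i) = {i, Suc i}"
  by (simp add: sref_def affected_swap)

lemma affected_mult_sref_subset:
  "affected w \<subseteq> {..<n} \<Longrightarrow> Suc i < n \<Longrightarrow> affected (w * sref i) \<subseteq> {..<n}"
  using affected_times[of w "sref i"] by (auto simp: affected_sref)

lemma finite_perms_affected_subset:
  assumes "finite A"
  shows "finite {u :: 'a perm. affected u \<subseteq> A}"
proof -
  let ?r = "\<lambda>u. restrict (Perm.apply u) A"
  have "inj_on ?r {u. affected u \<subseteq> A}"
  proof (rule inj_onI)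
    fix u v assume "u \<in> {u. affected u \<subseteq> A}" "v \<in> {u. affected u \<subseteq> A}" "?r u = ?r v"
    then show "u = v"
      by (intro perm_eqI) (metis (no_types, lifting) in_affected mem_Collect_eq restrict_apply' subsetD)
  qed
  moreover have "?r ` {u. affected u \<subseteq> A} \<subseteq> A \<rightarrow>\<^sub>E A"
    by (auto simp: PiE_iff) (metis apply_affected in_affected subsetD)
  ultimately show ?thesis
    using assms by (meson finite_PiE finite_imageD finite_subset)
qed

definition reduced_pairs :: "nat perm \<Rightarrow> (nat perm \<times> nat perm) set" where
  "reduced_pairs w = {(u, v). w = u * v \<and> len w = len u + len v}"

lemma affected_reduced_pair_subset:
  assumes "affected w \<subseteq> {..<n}" "(u, v) \<in> reduced_pairs w"
  shows "affected u \<subseteq> {..<n} \<and> affected v \<subseteq> {..<n}"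
  using assms
proof (induct "len v" arbitrary: w v)
  case 0
  then show ?case by (simp add: reduced_pairs_def len_eq_0_iff)
next
  case (Suc k)
  then obtain i where "descent v i" using exists_descent len_eq_0_iff by (metis Zero_not_Suc)
  then have lv: "len v = Suc (len (v * sref i))" by (rule len_mult_sref_descent)
  have w: "w = u * v" "len w = len u + len v" using Suc(4) by (auto simp: reduced_pairs_def)
  have ws: "w * sref i = u * (v * sref i)" using w by (simp add: mult.assoc)
  then have "len (w * sref i) \<le> len u + len (v * sref i)" by (metis len_mult_le)
  then have wi: "descent w i"
    using w lv len_mult_sref_ascent[of w i] by (cases "descent w i") auto
  moreover have "len (w * sref i) = len u + len (v * sref i)"
    using len_mult_sref_descent[OF wi] w lv by simp
  ultimately have "Suc i < n" "(u, v * sref i) \<in> reduced_pairs (w * sref i)"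
    using descent_less_if_affected_subset[OF Suc(3)] ws by (auto simp: reduced_pairs_def)
  moreover have "affected (w * sref i) \<subseteq> {..<n}"
    using affected_mult_sref_subset[OF Suc(3) \<open>Suc i < n\<close>] .
  ultimately have "affected u \<subseteq> {..<n} \<and> affected (v * sref i) \<subseteq> {..<n}"
    using Suc(1)[of "v * sref i" "w * sref i"] Suc(2) lv by simp
  then show ?case
    using affected_mult_sref_subset[of "v * sref i" n i] \<open>Suc i < n\<close> by simp
qed

lemma finite_reduced_pairs: "finite (reduced_pairs w)"
proof -
  obtain n where n: "affected w \<subseteq> {..<n}"
    using exists_affected_subset_lessThan by blast
  have "reduced_pairs w \<subseteq> {u. affected u \<subseteq> {..<n}} \<times> {u. affected u \<subseteq> {..<n}}"
    using affected_reduced_pair_subset[OF n] by auto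
  then show ?thesis
    using finite_perms_affected_subset[of "{..<n}"] by (simp add: finite_subset)
qed

lemma reduced_pairs_one: "reduced_pairs 1 = {(1, 1)}"
  by (auto simp: reduced_pairs_def len_eq_0_iff)

subsection \<open>Construction of the Schubert polynomials\<close>

lemma apply_w0: "Perm.apply (w0 n) j = (if j < n then n - 1 - j else j)"
proof -
  let ?f = "\<lambda>j::nat. if j < n then n - 1 - j else j"
  have "?f \<circ> ?f = id" by (auto simp: fun_eq_iff)
  then have "bij ?f" using o_bij by blast
  moreover have "finite {j. ?f j \<noteq> j}"
    by (rule finite_subset[of _ "{..<n}"]) (auto split: if_splits)
  ultimately show ?thesis unfolding w0_def by (simp add: Perm_inverse)
qed

lemma affected_w0_subset: "affected (w0 n) \<subseteq> {..<n}"
  by (auto simp: in_affected apply_w0 split: if_splits)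

lemma exists_ascent_if_ne_w0:
  assumes "affected w \<subseteq> {..<n}" "w \<noteq> w0 n"
  shows "\<exists>i. Suc i < n \<and> \<not> descent w i"
proof (rule ccontr)
  assume "\<not> ?thesis"
  then have dec: "Perm.apply w (Suc i) < Perm.apply w i" if "Suc i < n" for i
    using that by (auto simp: descent_def)
  have fixed: "Perm.apply w j = j" if "n \<le> j" for j
    using assms(1) that by (auto simp: in_affected)
  have upper: "Perm.apply w j \<le> n - 1 - j" if "j < n" for j
    using that
  proof (induct j)
    case 0
    then show ?case using apply_less_if_affected_subset[OF assms(1)] by fastforce
  next
    case (Suc j)
    then show ?case using dec[of j] by simp
  qed
  have lower: "n - 1 - j \<le> Perm.apply w j" if "j < n" for j
    using that
  proof (induct "n - 1 - j" arbitrary: j)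
    case (Suc k)
    then have "Suc j < n" by simp
    then have "n - 1 - Suc j \<le> Perm.apply w (Suc j)" using Suc by simp
    then show ?case using dec[OF \<open>Suc j < n\<close>] by simp
  qed simp
  have "w = w0 n"
    by (rule perm_eqI) (metis apply_w0 fixed upper lower le_antisym not_le)
  then show False using assms(2) by simp
qed

lemma len_mult_sref_ascent_measure:
  assumes "affected w \<subseteq> {..<n}" "Suc i < n" "\<not> descent w i"
  shows "n * n - len (w * sref i) < n * n - len w"
  using len_le_if_affected_subset[OF affected_mult_sref_subset[OF assms(1,2)]]
    len_mult_sref_ascent[OF assms(3)] by simp

definition first_ascent :: "nat \<Rightarrow> nat perm \<Rightarrow> nat" where
  "first_ascent n w = (LEAST i. Suc i < n \<and> \<not> descent w i)"

lemma first_ascent: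
  assumes "affected w \<subseteq> {..<n}" "w \<noteq> w0 n"
  shows "Suc (first_ascent n w) < n" "\<not> descent w (first_ascent n w)"
  using LeastI_ex[OF exists_ascent_if_ne_w0[OF assms]] by (simp_all add: first_ascent_def)

lemma first_ascent_le: "Suc i < n \<Longrightarrow> \<not> descent w i \<Longrightarrow> first_ascent n w \<le> i"
  unfolding first_ascent_def by (rule Least_le) simp

text \<open>Choosing the first ascent turns the recursion into a definition; that any other ascent
  gives the same polynomial rests on the commutation and braid relations of \<open>divdiff\<close>.\<close>

function schubert_in :: "nat \<Rightarrow> nat perm \<Rightarrow> qpoly" where
  "schubert_in n w =
    (if affected w \<subseteq> {..<n} \<and> w \<noteq> w0 n
     then divdiff (first_ascent n w) (schubert_in n (w * sref (first_ascent n w)))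
     else staircase n)"
  by pat_completeness auto
termination
proof (relation "measure (\<lambda>(n, w). n * n - len w)")
  fix n w assume "affected w \<subseteq> {..<n} \<and> w \<noteq> w0 n"
  then show "((n, w * sref (first_ascent n w)), n, w) \<in> measure (\<lambda>(n, w). n * n - len w)"
    using len_mult_sref_ascent_measure first_ascent by simp
qed simp

declare schubert_in.simps [simp del]

lemma schubert_in_w0: "schubert_in n (w0 n) = staircase n"
  by (simp add: schubert_in.simps)

lemma ascent_recursion_commute_case:
  fixes G :: "nat perm \<Rightarrow> qpoly"
  assumes IH: "\<And>x k. len w < len x \<Longrightarrow> affected x \<subseteq> {..<n} \<Longrightarrow> Suc k < n \<Longrightarrow>
      \<not> descent x k \<Longrightarrow> G x = divdiff k (G (x * sref k))"
    and w: "affected w \<subseteq> {..<n}" and ij: "Suc j < i" "Suc i < n"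
    and asc: "\<not> descent w i" "\<not> descent w j"
  shows "divdiff i (G (w * sref i)) = divdiff j (G (w * sref j))"
proof -
  have "G (w * sref i) = divdiff j (G (w * sref i * sref j))"
    using asc ij affected_mult_sref_subset[OF w, of i]
    by (intro IH) (auto simp: len_mult_sref_ascent descent_def apply_times apply_sref)
  moreover have "G (w * sref j) = divdiff i (G (w * sref j * sref i))"
    using asc ij affected_mult_sref_subset[OF w, of j]
    by (intro IH) (auto simp: len_mult_sref_ascent descent_def apply_times apply_sref)
  moreover have "w * sref i * sref j = w * sref j * sref i"
    using sref_commute[of j i] ij by (simp add: mult.assoc)
  ultimately show ?thesis using divdiff_commute[of j i] ij by simp
qed

lemma ascent_recursion_braid_case:
  fixes G :: "nat perm \<Rightarrow> qpoly"
  assumes IH: "\<And>x k. len w < len x \<Longrightarrow> affected x \<subseteq> {..<n} \<Longrightarrow> Suc k < n \<Longrightarrow>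
      \<not> descent x k \<Longrightarrow> G x = divdiff k (G (x * sref k))"
    and w: "affected w \<subseteq> {..<n}" and "Suc (Suc j) < n"
    and asc: "\<not> descent w j" "\<not> descent w (Suc j)"
  shows "divdiff j (G (w * sref j)) = divdiff (Suc j) (G (w * sref (Suc j)))"
proof -
  let ?l = "w * sref j" and ?r = "w * sref (Suc j)"
  have ls: "len w < len ?l" "len w < len ?r" "len w < len (?l * sref (Suc j))"
      "len w < len (?r * sref j)"
    using asc by (auto simp: len_mult_sref_ascent descent_def apply_times apply_sref)
  have aff: "affected ?l \<subseteq> {..<n}" "affected ?r \<subseteq> {..<n}"
      "affected (?l * sref (Suc j)) \<subseteq> {..<n}" "affected (?r * sref j) \<subseteq> {..<n}"
    using w \<open>Suc (Suc j) < n\<close> by (simp_all add: affected_mult_sref_subset)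
  have "G ?l = divdiff (Suc j) (G (?l * sref (Suc j)))"
    using asc \<open>Suc (Suc j) < n\<close> by (intro IH ls aff) (auto simp: descent_def apply_times apply_sref)
  also have "G (?l * sref (Suc j)) = divdiff j (G (?l * sref (Suc j) * sref j))"
    using asc \<open>Suc (Suc j) < n\<close> by (intro IH ls aff) (auto simp: descent_def apply_times apply_sref)
  finally have l: "G ?l = divdiff (Suc j) (divdiff j (G (?l * sref (Suc j) * sref j)))" .
  have "G ?r = divdiff j (G (?r * sref j))"
    using asc \<open>Suc (Suc j) < n\<close> by (intro IH ls aff) (auto simp: descent_def apply_times apply_sref)
  also have "G (?r * sref j) = divdiff (Suc j) (G (?r * sref j * sref (Suc j)))"
    using asc \<open>Suc (Suc j) < n\<close> by (intro IH ls aff) (auto simp: descent_def apply_times apply_sref)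
  also have "?r * sref j * sref (Suc j) = ?l * sref (Suc j) * sref j"
    using sref_braid[of j] by (simp add: mult.assoc)
  finally show ?thesis using l by (simp add: divdiff_braid)
qed

lemma schubert_in_ascent:
  assumes "affected w \<subseteq> {..<n}" "Suc i < n" "\<not> descent w i"
  shows "schubert_in n w = divdiff i (schubert_in n (w * sref i))"
  using assms
proof (induct "n * n - len w" arbitrary: w i rule: less_induct)
  case less
  have IH: "schubert_in n x = divdiff k (schubert_in n (x * sref k))"
    if "len w < len x" "affected x \<subseteq> {..<n}" "Suc k < n" "\<not> descent x k" for x k
    using less(1)[of x k] that len_le_if_affected_subset[OF that(2)] by simp
  have "w \<noteq> w0 n"
    using less(3,4) by (auto simp: descent_def apply_w0)
  define j where "j = first_ascent n w"
  have j: "Suc j < n" "\<not> descent w j" "j \<le> i"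
    using first_ascent[OF less(2) \<open>w \<noteq> w0 n\<close>] first_ascent_le[OF less(3,4)]
    by (simp_all add: j_def)
  have "schubert_in n w = divdiff j (schubert_in n (w * sref j))"
    using less(2) \<open>w \<noteq> w0 n\<close> by (subst schubert_in.simps) (simp add: j_def)
  moreover consider "j = i" | "Suc j < i" | "i = Suc j"
    using j(3) by linarith
  then have "divdiff j (schubert_in n (w * sref j)) = divdiff i (schubert_in n (w * sref i))"
  proof cases
    case 2
    show ?thesis
      by (rule ascent_recursion_commute_case[where G = "schubert_in n" and n = n, symmetric])
        (use IH less(2-4) j 2 in blast)+
  next
    case 3
    show ?thesis unfolding 3
      by (rule ascent_recursion_braid_case[where G = "schubert_in n" and n = n])
        (use IH less(2-4) j 3 in blast)+
  qed simp
  ultimately show ?case by simp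
qed

lemma ascent_recursion_unique:
  fixes G H :: "nat perm \<Rightarrow> qpoly"
  assumes "G (w0 n) = H (w0 n)"
    and G: "\<And>w i. affected w \<subseteq> {..<n} \<Longrightarrow> Suc i < n \<Longrightarrow> \<not> descent w i \<Longrightarrow>
      G w = divdiff i (G (w * sref i))"
    and H: "\<And>w i. affected w \<subseteq> {..<n} \<Longrightarrow> Suc i < n \<Longrightarrow> \<not> descent w i \<Longrightarrow>
      H w = divdiff i (H (w * sref i))"
    and "affected w \<subseteq> {..<n}"
  shows "G w = H w"
  using assms(4)
proof (induct "n * n - len w" arbitrary: w rule: less_induct)
  case less
  show ?case
  proof (cases "w = w0 n")
    case False
    then obtain i where i: "Suc i < n" "\<not> descent w i"
      using exists_ascent_if_ne_w0[OF less(2)] by blast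
    have "G (w * sref i) = H (w * sref i)"
      using len_mult_sref_ascent_measure[OF less(2) i] affected_mult_sref_subset[OF less(2) i(1)]
      by (rule less(1))
    then show ?thesis using G[OF less(2) i] H[OF less(2) i] by simp
  qed (use assms(1) in simp)
qed

primrec rotation :: "nat \<Rightarrow> nat perm" where
  "rotation 0 = 1"
| "rotation (Suc k) = rotation k * sref k"

lemma apply_rotation:
  "Perm.apply (rotation k) j = (if j < k then Suc j else if j = k then 0 else j)"
  by (induct k arbitrary: j) (auto simp: apply_times apply_sref)

lemma w0_Suc_mult_rotation: "w0 (Suc n) * rotation n = w0 n"
  by (rule perm_eqI) (auto simp: apply_times apply_rotation apply_w0)

text \<open>Interpolates between \<open>staircase (Suc n)\<close> at \<open>k = 0\<close> and \<open>staircase n\<close> at \<open>k = n\<close>.\<close>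

definition staircase_drop :: "nat \<Rightarrow> nat \<Rightarrow> qpoly" where
  "staircase_drop n k = (\<Prod>j<Suc n. var j ^ (if j < k then n - 1 - j else n - j))"

lemma prod_lessThan_split_pair:
  assumes "Suc k < n"
  shows "(\<Prod>j<n. g j) = g k * g (Suc k) * (\<Prod>j\<in>{..<n} - {k, Suc k}. g j)"
proof -
  have "(\<Prod>j<n. g j) = g k * (\<Prod>j\<in>{..<n} - {k}. g j)"
    using assms by (intro prod.remove) auto
  also have "(\<Prod>j\<in>{..<n} - {k}. g j) = g (Suc k) * (\<Prod>j\<in>{..<n} - {k} - {Suc k}. g j)"
    using assms by (intro prod.remove) auto
  also have "{..<n} - {k} - {Suc k} = {..<n} - {k, Suc k}" by auto
  finally show ?thesis by (simp add: mult.assoc)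
qed

lemma divdiff_staircase_drop:
  assumes "k < n"
  shows "divdiff k (staircase_drop n k) = staircase_drop n (Suc k)"
proof -
  define R where "R = (\<Prod>j\<in>{..<Suc n} - {k, Suc k}. var j ^ (if j < k then n - 1 - j else n - j))"
  define m where "m = n - Suc k"
  have split: "staircase_drop n l = var k ^ e k * var (Suc k) ^ e (Suc k) * R"
    if "e = (\<lambda>j. if j < l then n - 1 - j else n - j)" "l = k \<or> l = Suc k" for l e
  proof -
    have "staircase_drop n l = (\<Prod>j<Suc n. var j ^ e j)"
      unfolding staircase_drop_def that(1) ..
    also have "\<dots> = var k ^ e k * var (Suc k) ^ e (Suc k) *
        (\<Prod>j\<in>{..<Suc n} - {k, Suc k}. var j ^ e j)"
      by (rule prod_lessThan_split_pair) (use assms in simp)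
    also have "(\<Prod>j\<in>{..<Suc n} - {k, Suc k}. var j ^ e j) = R"
      unfolding R_def that(1) using that(2) by (intro prod.cong) auto
    finally show ?thesis .
  qed
  have "swap_vars k R = R"
    unfolding R_def swap_vars_eq_permute_vars permute_vars_prod
    by (intro prod.cong) (auto simp: apply_sref)
  moreover have "swap_vars k (var k * var (Suc k)) = var k * var (Suc k)"
    by (simp add: apply_sref mult.commute)
  ultimately have sym: "swap_vars k (R * (var k * var (Suc k)) ^ m) = R * (var k * var (Suc k)) ^ m"
    by (simp add: swap_vars_eq_permute_vars)
  have "n - k = Suc m" using assms by (simp add: m_def)
  then have "staircase_drop n k = R * (var k * var (Suc k)) ^ m * var k"
    using split[OF refl, of k] by (simp add: m_def power_mult_distrib ac_simps)
  moreover have "staircase_drop n (Suc k) = R * (var k * var (Suc k)) ^ m"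
    using split[OF refl, of "Suc k"] assms by (simp add: m_def power_mult_distrib ac_simps)
  ultimately show ?thesis
    by (simp add: divdiff_mult_invariant[OF sym] divdiff_var_self)
qed

lemma schubert_in_w0_mult_rotation:
  assumes "k \<le> n"
  shows "schubert_in (Suc n) (w0 (Suc n) * rotation k) = staircase_drop n k"
  using assms
proof (induct k)
  case 0
  then show ?case by (simp add: schubert_in_w0 staircase_drop_def staircase_def)
next
  case (Suc k)
  let ?x = "w0 (Suc n) * rotation (Suc k)"
  have "affected (rotation (Suc k)) \<subseteq> {..<Suc n}"
    using Suc(2) by (auto simp: in_affected apply_rotation split: if_splits simp del: rotation.simps)
  then have "affected ?x \<subseteq> {..<Suc n}"
    using affected_times[of "w0 (Suc n)"] affected_w0_subset[of "Suc n"] by blast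
  moreover have "\<not> descent ?x k"
    using Suc(2) by (simp add: descent_def apply_times apply_rotation apply_w0 del: rotation.simps)
  ultimately have "schubert_in (Suc n) ?x = divdiff k (schubert_in (Suc n) (?x * sref k))"
    using Suc(2) by (intro schubert_in_ascent) simp_all
  also have "?x * sref k = w0 (Suc n) * rotation k" by (simp add: mult.assoc)
  finally show ?case using Suc divdiff_staircase_drop[of k n] by simp
qed

lemma schubert_in_Suc_w0: "schubert_in (Suc n) (w0 n) = staircase n"
  using schubert_in_w0_mult_rotation[of n n]
  by (simp add: w0_Suc_mult_rotation staircase_drop_def staircase_def)

lemma schubert_in_Suc:
  assumes "affected w \<subseteq> {..<n}"
  shows "schubert_in (Suc n) w = schubert_in n w"
proof (rule ascent_recursion_unique[OF _ _ _ assms])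
  show "schubert_in (Suc n) (w0 n) = schubert_in n (w0 n)"
    by (simp add: schubert_in_Suc_w0 schubert_in_w0)
next
  fix w i assume "affected w \<subseteq> {..<n}" "Suc i < n" "\<not> descent w i"
  then show "schubert_in (Suc n) w = divdiff i (schubert_in (Suc n) (w * sref i))"
    by (intro schubert_in_ascent) auto
qed (rule schubert_in_ascent)

lemma schubert_in_mono:
  assumes "affected w \<subseteq> {..<n}" "n \<le> m"
  shows "schubert_in m w = schubert_in n w"
  using assms(2)
proof (induct m rule: dec_induct)
  case (step m)
  then have "affected w \<subseteq> {..<m}" using assms(1) by auto
  then show ?case using schubert_in_Suc[of w m] step by simp
qed simp

lemma schubert_in_divdiff:
  assumes "affected w \<subseteq> {..<n}" "Suc i < n"
  shows "divdiff i (schubert_in n w) = (if descent w i then schubert_in n (w * sref i) else 0)"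
proof (cases "descent w i")
  case True
  then show ?thesis
    using schubert_in_ascent[OF affected_mult_sref_subset[OF assms] assms(2)] by simp
next
  case False
  then show ?thesis using schubert_in_ascent[OF assms False] by simp
qed

lemma schubert_in_eq:
  assumes "affected w \<subseteq> {..<n}" "affected w \<subseteq> {..<m}"
  shows "schubert_in n w = schubert_in m w"
  using schubert_in_mono[OF assms(1), of "max n m"] schubert_in_mono[OF assms(2), of "max n m"]
  by simp

lemma is_schubert_family_imp_eq_schubert_in:
  assumes S: "is_schubert_family S" and w: "affected w \<subseteq> {..<n}"
  shows "S w = schubert_in n w"
proof -
  have "S w = schubert_in (Suc n) w"
  proof (rule ascent_recursion_unique)
    show "S (w0 (Suc n)) = schubert_in (Suc n) (w0 (Suc n))"
      using S by (simp add: is_schubert_family_def schubert_in_w0)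
  next
    fix x i assume "\<not> descent x i"
    then show "S x = divdiff i (S (x * sref i))"
      using S len_mult_sref_ascent[of x i] by (simp add: is_schubert_family_def)
  next
    show "affected w \<subseteq> {..<Suc n}" using w by auto
  qed (rule schubert_in_ascent)
  then show ?thesis using schubert_in_Suc[OF w] by simp
qed

lemma is_schubert_family_schubert_in:
  "is_schubert_family (\<lambda>w. schubert_in (SOME n. affected w \<subseteq> {..<n}) w)"
    (is "is_schubert_family ?S")
proof -
  have some: "affected w \<subseteq> {..<SOME n. affected w \<subseteq> {..<n}}" for w :: "nat perm"
    by (rule someI_ex) (rule exists_affected_subset_lessThan)
  then have S: "?S w = schubert_in n w" if "affected w \<subseteq> {..<n}" for w n
    using that schubert_in_eq by blast
  have "divdiff i (?S w) = (if len (w * sref i) + 1 = len w then ?S (w * sref i) else 0)" for w i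
  proof -
    define n where "n = max (SOME n. affected w \<subseteq> {..<n}) (Suc (Suc i))"
    have w: "affected w \<subseteq> {..<n}" "Suc i < n"
      using some[of w] by (auto simp: n_def)
    show ?thesis
      using schubert_in_divdiff[OF w] S[OF w(1)] S[OF affected_mult_sref_subset[OF w]]
      by (simp add: descent_iff_len_mult_sref)
  qed
  then show ?thesis
    using S[OF affected_w0_subset] by (simp add: is_schubert_family_def schubert_in_w0)
qed

lemma is_schubert_family_schubert: "is_schubert_family schubert"
proof -
  have "T = (\<lambda>w. schubert_in (SOME n. affected w \<subseteq> {..<n}) w)" if "is_schubert_family T" for T
  proof
    fix w
    show "T w = schubert_in (SOME n. affected w \<subseteq> {..<n}) w"
      by (rule is_schubert_family_imp_eq_schubert_in[OF that someI_ex])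
        (rule exists_affected_subset_lessThan)
  qed
  then show ?thesis
    unfolding schubert_def
    by (rule theI[where P = is_schubert_family, OF is_schubert_family_schubert_in])
qed

lemma schubert_eq_schubert_in: "affected w \<subseteq> {..<n} \<Longrightarrow> schubert w = schubert_in n w"
  by (rule is_schubert_family_imp_eq_schubert_in[OF is_schubert_family_schubert])

lemma divdiff_schubert:
  "divdiff i (schubert w) = (if descent w i then schubert (w * sref i) else 0)"
  using is_schubert_family_schubert by (simp add: is_schubert_family_def descent_iff_len_mult_sref)

lemma schubert_one [simp]: "schubert 1 = 1"
proof -
  have "w0 0 = 1" by (rule perm_eqI) (simp add: apply_w0)
  then show ?thesis
    using schubert_eq_schubert_in[of 1 0] schubert_in_w0[of 0] by (simp add: staircase_def)
qed

subsection \<open>Homogeneity\<close>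

definition total_degree :: "(nat \<Rightarrow>\<^sub>0 nat) \<Rightarrow> nat" where
  "total_degree m = (\<Sum>k\<in>Poly_Mapping.keys m. Poly_Mapping.lookup m k)"

lemma total_degree_eq_sum_superset:
  "finite A \<Longrightarrow> Poly_Mapping.keys m \<subseteq> A \<Longrightarrow> total_degree m = (\<Sum>k\<in>A. Poly_Mapping.lookup m k)"
  unfolding total_degree_def by (rule sum.mono_neutral_left) (auto simp: in_keys_iff)

lemma total_degree_add: "total_degree (a + b) = total_degree a + total_degree b"
proof -
  let ?A = "Poly_Mapping.keys a \<union> Poly_Mapping.keys b"
  have "Poly_Mapping.keys (a + b) \<subseteq> ?A" by (auto simp: in_keys_iff lookup_add)
  then show ?thesis
    by (simp add: total_degree_eq_sum_superset[of ?A] lookup_add sum.distrib)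
qed

lemma total_degree_zero [simp]: "total_degree 0 = 0"
  by (simp add: total_degree_def)

lemma total_degree_single [simp]: "total_degree (Poly_Mapping.single j k) = k"
  by (cases "k = 0") (simp_all add: total_degree_def)

lemma total_degree_permute_exps [simp]: "total_degree (permute_exps \<sigma> m) = total_degree m"
proof -
  have "Poly_Mapping.keys (permute_exps \<sigma> m) = Perm.apply (inverse \<sigma>) ` Poly_Mapping.keys m"
  proof (rule set_eqI)
    fix x
    have "x = Perm.apply (inverse \<sigma>) (Perm.apply \<sigma> x)" by simp
    then show "x \<in> Poly_Mapping.keys (permute_exps \<sigma> m) \<longleftrightarrow>
        x \<in> Perm.apply (inverse \<sigma>) ` Poly_Mapping.keys m"
      by (auto simp: in_keys_iff lookup_permute_exps simp del: apply_inverse_apply)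
  qed
  then show ?thesis
    by (simp add: total_degree_def sum.reindex inj_on_def apply_inj lookup_permute_exps)
qed

text \<open>\<open>double_vars f\<close> is \<open>f(2x\<^sub>0, 2x\<^sub>1, \<dots>)\<close>; so \<open>f\<close> is homogeneous of degree \<open>d\<close> iff
  \<open>double_vars f = 2\<^sup>d f\<close>, a characterisation compatible with products and with
  cancelling the nonzero factor in the definition of \<open>divdiff\<close>.\<close>

definition double_vars :: "qpoly \<Rightarrow> qpoly" where
  "double_vars f = Abs_poly_mapping (\<lambda>m. 2 ^ total_degree m * Poly_Mapping.lookup f m)"

definition homogeneous :: "nat \<Rightarrow> qpoly \<Rightarrow> bool" where
  "homogeneous d f \<longleftrightarrow> double_vars f = 2 ^ d * f"

lemma lookup_double_vars:
  "Poly_Mapping.lookup (double_vars f) m = 2 ^ total_degree m * Poly_Mapping.lookup f m"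
proof -
  have "finite {m. 2 ^ total_degree m * Poly_Mapping.lookup f m \<noteq> (0::rat)}"
    by (rule finite_subset[of _ "Poly_Mapping.keys f"]) (auto simp: in_keys_iff)
  then show ?thesis unfolding double_vars_def by simp
qed

lemma double_vars_add [simp]: "double_vars (f + g) = double_vars f + double_vars g"
  and double_vars_diff [simp]: "double_vars (f - g) = double_vars f - double_vars g"
  by (rule poly_mapping_eqI; simp add: lookup_double_vars lookup_add lookup_minus algebra_simps)+

lemma double_vars_single:
  "double_vars (Poly_Mapping.single m c) = Poly_Mapping.single m (2 ^ total_degree m * c)"
  by (rule poly_mapping_eqI) (simp add: lookup_double_vars lookup_single when_def)

lemma double_vars_one [simp]: "double_vars 1 = 1"
  using double_vars_single[of 0 1] by simp

lemma double_vars_mult [simp]: "double_vars (f * g) = double_vars f * double_vars g"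
  by (rule multiplicative_if_multiplicative_on_single)
    (simp_all add: mult_single double_vars_single total_degree_add power_add mult_ac)

lemma double_vars_var: "double_vars (var j) = 2 * var j"
  by (simp add: var_def double_vars_single mult_single flip: single_numeral)

lemma double_vars_swap_vars: "double_vars (swap_vars i f) = swap_vars i (double_vars f)"
  by (rule additive_eq_if_eq_on_single[where \<phi> = "\<lambda>f. double_vars (swap_vars i f)"])
    (simp_all add: swap_vars_eq_permute_vars permute_vars_single double_vars_single)

lemma homogeneous_divdiff:
  assumes "homogeneous (Suc d) f"
  shows "homogeneous d (divdiff i f)"
proof -
  have "double_vars (var_diff i) = 2 * var_diff i"
    by (simp add: var_diff_def double_vars_var algebra_simps)
  then have "2 * var_diff i * double_vars (divdiff i f) = double_vars (f - swap_vars i f)"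
    by (simp flip: var_diff_mult_divdiff)
  also have "\<dots> = 2 ^ Suc d * f - swap_vars i (2 ^ Suc d * f)"
    using assms by (simp add: double_vars_swap_vars homogeneous_def)
  also have "\<dots> = 2 ^ Suc d * (f - swap_vars i f)"
    by (simp add: swap_vars_eq_permute_vars right_diff_distrib)
  also have "\<dots> = 2 * var_diff i * (2 ^ d * divdiff i f)"
    by (simp only: var_diff_mult_divdiff[symmetric]) (simp add: ac_simps)
  finally show ?thesis by (simp add: homogeneous_def)
qed

lemma homogeneous_staircase: "homogeneous (len (w0 n)) (staircase n)"
proof -
  have "inversions (w0 n) = (SIGMA a:{..<n}. {a<..<n})"
    by (auto simp: inversions_def apply_w0)
  then have "len (w0 n) = (\<Sum>a<n. n - 1 - a)"
    by (simp add: len_eq_card_inversions card_SigmaI)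
  moreover have "double_vars (var j ^ k) = 2 ^ k * var j ^ k" for j k
    by (induct k) (simp_all add: double_vars_var power_mult_distrib algebra_simps)
  moreover have "double_vars (prod g A) = (\<Prod>a\<in>A. double_vars (g a))" for g and A :: "nat set"
    by (induct A rule: infinite_finite_induct) simp_all
  ultimately show ?thesis
    by (simp add: homogeneous_def staircase_def prod.distrib power_sum)
qed

lemma homogeneous_schubert_in:
  "affected w \<subseteq> {..<n} \<Longrightarrow> homogeneous (len w) (schubert_in n w)"
proof (induct "n * n - len w" arbitrary: w rule: less_induct)
  case less
  show ?case
  proof (cases "w = w0 n")
    case False
    then obtain i where i: "Suc i < n" "\<not> descent w i"
      using exists_ascent_if_ne_w0[OF less(2)] by blast
    have "homogeneous (len (w * sref i)) (schubert_in n (w * sref i))"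
      using len_mult_sref_ascent_measure[OF less(2) i] affected_mult_sref_subset[OF less(2) i(1)]
      by (rule less(1))
    then show ?thesis
      using schubert_in_ascent[OF less(2) i] len_mult_sref_ascent[OF i(2)] homogeneous_divdiff
      by simp
  qed (simp add: schubert_in_w0 homogeneous_staircase)
qed

lemma lookup_zero_if_homogeneous:
  assumes "homogeneous d f" "0 < d"
  shows "Poly_Mapping.lookup f 0 = 0"
proof -
  have "(2 :: qpoly) ^ d = Poly_Mapping.single 0 (2 ^ d)"
    by (induct d) (simp_all add: mult_single flip: single_numeral)
  then have "Poly_Mapping.lookup (2 ^ d * f) 0 = 2 ^ d * Poly_Mapping.lookup f 0"
    by (simp add: lookup_mult_zero)
  moreover have "Poly_Mapping.lookup (double_vars f) 0 = Poly_Mapping.lookup f 0"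
    by (simp add: lookup_double_vars total_degree_def)
  ultimately have "Poly_Mapping.lookup f 0 = 2 ^ d * Poly_Mapping.lookup f 0"
    using assms(1) by (simp add: homogeneous_def)
  moreover have "(2::rat) ^ d \<noteq> 1" using one_less_power[of "2::rat" d] assms(2) by linarith
  ultimately show ?thesis by simp
qed

lemma lookup_schubert_zero: "w \<noteq> 1 \<Longrightarrow> Poly_Mapping.lookup (schubert w) 0 = 0"
  using exists_affected_subset_lessThan[of w] homogeneous_schubert_in schubert_eq_schubert_in
    lookup_zero_if_homogeneous len_eq_0_iff by (metis gr0I)

subsection \<open>Symmetric polynomials in infinitely many variables\<close>

lemma permute_vars_eq_if_swap_vars_eq:
  assumes "\<And>i. swap_vars i f = f"
  shows "permute_vars \<sigma> f = f"
proof (induct "len \<sigma>" arbitrary: \<sigma>)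
  case 0
  then show ?case by (simp add: len_eq_0_iff)
next
  case (Suc k)
  then obtain i where "descent \<sigma> i" using exists_descent len_eq_0_iff by (metis Zero_not_Suc)
  then have "len (\<sigma> * sref i) = k" using len_mult_sref_descent Suc(2) by simp
  then have "permute_vars (\<sigma> * sref i) (swap_vars i f) = f" using Suc(1) assms by simp
  then show ?case by (simp add: swap_vars_eq_permute_vars permute_vars_permute_vars mult.assoc)
qed

text \<open>In infinitely many variables a symmetric polynomial is constant: a transposition moving
  a variable of a monomial beyond all variables occurring in \<open>f\<close> shows that its
  coefficient vanishes.\<close>

lemma swap_vars_invariant_imp_const:
  assumes "\<And>i. swap_vars i f = f"
  shows "f = Poly_Mapping.single 0 (Poly_Mapping.lookup f 0)"
proof (rule poly_mapping_eqI)
  fix m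
  show "Poly_Mapping.lookup f m = Poly_Mapping.lookup (Poly_Mapping.single 0 (Poly_Mapping.lookup f 0)) m"
  proof (cases "m = 0")
    case False
    then obtain j where j: "j \<in> Poly_Mapping.keys m"
      by (metis all_not_in_conv keys_eq_empty)
    define V where "V = insert j (\<Union> (Poly_Mapping.keys ` Poly_Mapping.keys f))"
    obtain b where b: "\<forall>x\<in>V. x < b"
      using finite_nat_set_iff_bounded[THEN iffD1, of V] by (auto simp: V_def)
    let ?\<sigma> = "Perm.swap j b"
    have "b \<in> Poly_Mapping.keys (permute_exps ?\<sigma> m)"
      using j b by (auto simp: V_def in_keys_iff lookup_permute_exps)
    then have "permute_exps ?\<sigma> m \<notin> Poly_Mapping.keys f"
      using b by (auto simp: V_def)
    then have "Poly_Mapping.lookup (permute_vars ?\<sigma> f) m = 0"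
      by (simp add: lookup_permute_vars in_keys_iff)
    then show ?thesis
      using False by (simp add: permute_vars_eq_if_swap_vars_eq[OF assms] lookup_single when_def)
  qed simp
qed

subsection \<open>The inversion formula\<close>

lemma reduced_pairs_mult_sref:
  assumes "(u, v) \<in> reduced_pairs w" "descent u i \<or> descent (inverse v) i"
  shows "(u * sref i, sref i * v) \<in> reduced_pairs w"
proof -
  have w: "w = u * v" "len w = len u + len v" using assms(1) by (auto simp: reduced_pairs_def)
  then have w': "w = (u * sref i) * (sref i * v)" by (simp add: mult.assoc flip: mult.assoc[of "sref i"])
  then have "len w \<le> len (u * sref i) + len (sref i * v)" by (metis len_mult_le)
  moreover have "len (u * sref i) + len (sref i * v) \<le> len u + len v"
    using assms(2) len_mult_sref_descent[of u i] len_mult_sref_le[of u i]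
      len_mult_sref_descent[of "inverse v" i] len_mult_sref_le[of "inverse v" i]
    by (auto simp: len_sref_mult)
  ultimately show ?thesis using w w' by (simp add: reduced_pairs_def)
qed

lemma reduced_pair_not_both_descents:
  assumes "(u, v) \<in> reduced_pairs w" "descent u i"
  shows "\<not> descent (inverse v) i"
proof
  assume "descent (inverse v) i"
  then have "len (u * sref i) + len (sref i * v) < len u + len v"
    using assms(2) len_mult_sref_descent[of u i] len_mult_sref_descent[of "inverse v" i]
    by (simp add: len_sref_mult)
  moreover have "(u * sref i, sref i * v) \<in> reduced_pairs w"
    using reduced_pairs_mult_sref assms by blast
  then have "len w = len (u * sref i) + len (sref i * v)" unfolding reduced_pairs_def by blast
  moreover have "len w = len u + len v" using assms(1) unfolding reduced_pairs_def by blast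
  ultimately show False by simp
qed

definition schubert_convolution :: "nat perm \<Rightarrow> qpoly" where
  "schubert_convolution w =
    (\<Sum>(u, v)\<in>reduced_pairs w. (-1) ^ len v * schubert (inverse v) * schubert u)"

lemma divdiff_schubert_mult_reduced_pair:
  assumes "(u, v) \<in> reduced_pairs w"
  shows "divdiff i (schubert (inverse v) * schubert u) =
    (if descent (inverse v) i then schubert (inverse v * sref i) * schubert u else 0) +
    (if descent u i then schubert (inverse v) * schubert (u * sref i) else 0)"
  using reduced_pair_not_both_descents[OF assms, of i] by (simp add: divdiff_mult divdiff_schubert)

text \<open>The two kinds of terms in \<open>divdiff i (schubert_convolution w)\<close> cancel in pairs under
  \<open>(u, v) \<mapsto> (u s\<^sub>i, s\<^sub>i v)\<close>, which changes the sign \<open>(-1)\<^bsup>len v\<^esup>\<close>.\<close>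

lemma divdiff_schubert_convolution: "divdiff i (schubert_convolution w) = 0"
proof -
  let ?s = "sref i" and ?P = "reduced_pairs w"
  define A where "A = {p \<in> ?P. descent (inverse (snd p)) i}"
  define B where "B = {p \<in> ?P. descent (fst p) i}"
  define a where "a = (\<lambda>(u, v). (-1) ^ len v * schubert (inverse v * ?s) * schubert u :: qpoly)"
  define b where "b = (\<lambda>(u, v). (-1) ^ len v * schubert (inverse v) * schubert (u * ?s) :: qpoly)"
  have "divdiff i (schubert_convolution w) = (\<Sum>p\<in>?P.
      (if descent (inverse (snd p)) i then a p else 0) + (if descent (fst p) i then b p else 0))"
    unfolding schubert_convolution_def divdiff_sum
  proof (rule sum.cong, simp, clarify)
    fix u v assume uv: "(u, v) \<in> ?P"
    have "swap_vars i ((-1) ^ len v) = (-1) ^ len v"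
      by (simp add: swap_vars_eq_permute_vars)
    then show "divdiff i ((-1) ^ len v * schubert (inverse v) * schubert u) =
        (if descent (inverse (snd (u, v))) i then a (u, v) else 0) +
        (if descent (fst (u, v)) i then b (u, v) else 0)"
      using divdiff_schubert_mult_reduced_pair[OF uv, of i]
      by (simp add: mult.assoc divdiff_mult_invariant a_def b_def distrib_left)
  qed
  also have "\<dots> = sum a A + sum b B"
    using finite_reduced_pairs[of w] by (simp add: sum.distrib sum.inter_filter A_def B_def)
  also have "sum a A = sum (\<lambda>p. - b p) B"
  proof (rule sum.reindex_bij_witness[where i = "\<lambda>(u, v). (u * ?s, ?s * v)"
        and j = "\<lambda>(u, v). (u * ?s, ?s * v)"])
    fix p assume "p \<in> B"
    then obtain u v where p: "p = (u, v)" "(u, v) \<in> ?P" "descent u i"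
      by (cases p) (auto simp: B_def)
    then show "(case (case p of (u, v) \<Rightarrow> (u * ?s, ?s * v)) of (u, v) \<Rightarrow> (u * ?s, ?s * v)) = p"
      by (simp add: mult.assoc flip: mult.assoc[of ?s])
    show "(case p of (u, v) \<Rightarrow> (u * ?s, ?s * v)) \<in> A"
      using p reduced_pairs_mult_sref[of u v w i] reduced_pair_not_both_descents[OF p(2,3)]
      by (simp add: A_def mult.assoc)
  next
    fix p assume "p \<in> A"
    then obtain u v where p: "p = (u, v)" "(u, v) \<in> ?P" "descent (inverse v) i"
      by (cases p) (auto simp: A_def)
    then show "(case (case p of (u, v) \<Rightarrow> (u * ?s, ?s * v)) of (u, v) \<Rightarrow> (u * ?s, ?s * v)) = p"
      by (simp add: mult.assoc flip: mult.assoc[of ?s])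
    have "\<not> descent u i" using reduced_pair_not_both_descents[OF p(2)] p(3) by blast
    then show "(case p of (u, v) \<Rightarrow> (u * ?s, ?s * v)) \<in> B"
      using p reduced_pairs_mult_sref[of u v w i] by (simp add: B_def)
    have "len v = Suc (len (?s * v))"
      using len_mult_sref_descent[OF p(3)] by (simp add: len_sref_mult)
    then show "- b (case p of (u, v) \<Rightarrow> (u * ?s, ?s * v)) = a p"
      using p(1) by (simp add: a_def b_def mult.assoc)
  qed
  finally show ?thesis by (simp add: sum_negf)
qed

lemma schubert_convolution_eq: "schubert_convolution w = (if w = 1 then 1 else 0)"
proof (cases "w = 1")
  case False
  have "swap_vars i (schubert_convolution w) = schubert_convolution w" for i
    using divdiff_schubert_convolution divdiff_eq_0_iff by blast
  then have const: "schubert_convolution w =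
      Poly_Mapping.single 0 (Poly_Mapping.lookup (schubert_convolution w) 0)"
    by (rule swap_vars_invariant_imp_const)
  have "Poly_Mapping.lookup ((-1) ^ len v * schubert (inverse v) * schubert u) 0 = 0"
    if "(u, v) \<in> reduced_pairs w" for u v
  proof -
    have "inverse v = 1 \<Longrightarrow> v = 1" by (metis perm.inverse_inverse perm.inverse_neutral)
    then have "u \<noteq> 1 \<or> inverse v \<noteq> 1" using that False by (auto simp: reduced_pairs_def)
    then show ?thesis using lookup_schubert_zero by (auto simp: lookup_mult_zero)
  qed
  then have "Poly_Mapping.lookup (schubert_convolution w) 0 = 0"
    by (simp add: schubert_convolution_def lookup_sum case_prod_beta)
  then show ?thesis using const False by simp
qed (simp add: schubert_convolution_def reduced_pairs_one)

text \<open>The inversion formula determines \<open>S\<close>: the summand with \<open>u = 1\<close> carries \<open>S w\<^sup>-\<^sup>1\<close>, while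
  all other summands only involve \<open>S\<close> at permutations of smaller length.\<close>

lemma eq_if_same_convolution:
  fixes S T :: "nat perm \<Rightarrow> qpoly"
  assumes "\<And>w. (\<Sum>(u, v)\<in>reduced_pairs w. (-1) ^ len v * S (inverse v) * schubert u) =
      (\<Sum>(u, v)\<in>reduced_pairs w. (-1) ^ len v * T (inverse v) * schubert u)"
  shows "S w = T w"
proof (induct "len w" arbitrary: w rule: less_induct)
  case less
  let ?d = "\<lambda>(u, v). (-1) ^ len v * (S (inverse v) - T (inverse v)) * schubert u"
  have "(\<Sum>p\<in>reduced_pairs (inverse w). ?d p) = 0"
    using assms[of "inverse w"]
    by (simp add: case_prod_beta algebra_simps sum_subtractf)
  moreover have "(1, inverse w) \<in> reduced_pairs (inverse w)"
    by (simp add: reduced_pairs_def)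
  moreover have "?d p = 0" if "p \<in> reduced_pairs (inverse w) - {(1, inverse w)}" for p
  proof -
    obtain u v where p: "p = (u, v)" by (cases p)
    then have "len w = len u + len v" "u \<noteq> 1"
      using that by (auto simp: reduced_pairs_def)
    then have "len v < len w" using len_eq_0_iff[of u] by simp
    then show ?thesis using less p by simp
  qed
  ultimately have "?d (1, inverse w) = 0"
    using sum.remove[OF finite_reduced_pairs, of "(1, inverse w)" "inverse w" ?d] by simp
  then show ?case by simp
qed

theorem lemma3:
  fixes S :: "nat perm \<Rightarrow> qpoly"
  assumes "\<forall>w. (\<Sum>(u, v) \<in> {(u, v). w = u * v \<and> len w = len u + len v}.
               (-1) ^ len v * S (inverse v) * schubert u) = (if w = 1 then 1 else 0)"
  shows "\<forall>w. S w = schubert w"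
proof
  fix w
  show "S w = schubert w"
  proof (rule eq_if_same_convolution)
    fix x
    show "(\<Sum>(u, v)\<in>reduced_pairs x. (-1) ^ len v * S (inverse v) * schubert u) =
        (\<Sum>(u, v)\<in>reduced_pairs x. (-1) ^ len v * schubert (inverse v) * schubert u)"
      using assms schubert_convolution_eq[of x]
      by (simp add: reduced_pairs_def schubert_convolution_def)
  qed
qed

end
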